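(* Let $n,m,V$ be positive integers, let $\lambda>0$ and $\beta_\lambda>0$. For each $v\in\{1,\dots,V\}$ let $\mathbf{Z}_v\in\Delta^n_m$ and let $\mathbf{T}_v\in\mathbb{R}^{m\times m}$ satisfy $\mathbf{T}_v^\top\mathbf{T}_v=\mathbf{I}_m$. Let $\mathbf{H}\in\mathbb{R}^{n\times m}$ be a fixed matrix with nonnegative entries. For $\boldsymbol{\alpha}=(\alpha_1,\dots,\alpha_V)^\top\in\mathbb{R}^V$ define $$h(\boldsymbol{\alpha})=\max_{\mathbf{P}\in\Delta^n_m}\ \lambda\sum_{v=1}^V\alpha_v^2\,\mathrm{Tr}\big(\mathbf{P}^\top\mathbf{Z}_v\mathbf{T}_v\big)-\beta_\lambda\|\mathbf{P}\|_F^2-\sum_{i=1}^n\sum_{j=1}^m H_{ij}P_{ij}.$$ Then $h$ is differentiable at every $\boldsymbol{\alpha}$ with $\boldsymbol{\alpha}^\top\in\Delta^1_V$, and for each $v$, $$\frac{\partial h(\boldsymbol{\alpha})}{\partial\alpha_v}=2\lambda\alpha_v\,\mathrm{Tr}\big(\mathbf{P}^{\star\top}\mathbf{Z}_v\mathbf{T}_v\big),$$ where $\mathbf{P}^\star$ is the (unique) maximizer of the inner maximization problem at $\boldsymbol{\alpha}$.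
   Context: For positive integers $a,b$, $\Delta^a_b=\{\zeta\in\mathbb{R}^{a\times b}:\zeta\mathbf{1}_b=\mathbf{1}_a,\ \zeta\ge 0\}$ denotes the set of $a\times b$ nonnegative matrices whose rows each sum to $1$; in particular $\boldsymbol{\alpha}^\top\in\Delta^1_V$ means $\boldsymbol{\alpha}$ lies in the probability simplex of $\mathbb{R}^V$. $\|\cdot\|_F$ is the Frobenius norm. In the paper's setting, $H_{ij}=\|\mathbf{F}_{i\cdot}/\sqrt{d_i}-\mathbf{Q}_{j\cdot}/\sqrt{d_{n+j}}\|_2^2$ for soft label matrices $\mathbf{F}\in\mathbb{R}^{n\times c}$, $\mathbf{Q}\in\mathbb{R}^{m\times c}$ and graph degrees $d_k$, and this matrix is held fixed in the inner problem. *)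

theory Defs
  imports "HOL-Analysis.Analysis"
begin

text \<open>Row-stochastic matrices: the set Delta^a_b (a rows, b columns).\<close>
definition row_stoch :: "(real^'b^'a) set" where
  "row_stoch = {P. (\<forall>i j. 0 \<le> P$i$j) \<and> (\<forall>i. (\<Sum>j\<in>UNIV. P$i$j) = 1)}"

definition frob_sq :: "real^'b^'a \<Rightarrow> real" where
  "frob_sq P = (\<Sum>i\<in>UNIV. \<Sum>j\<in>UNIV. (P$i$j)^2)"

definition inner_obj ::
  "real \<Rightarrow> real \<Rightarrow> ('v \<Rightarrow> real^'m^'n) \<Rightarrow> ('v \<Rightarrow> real^'m^'m) \<Rightarrow> real^'m^'n
     \<Rightarrow> real^'v::finite \<Rightarrow> real^'m::finite^'n::finite \<Rightarrow> real" where
  "inner_obj lam beta Z T H \<alpha> P =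
     lam * (\<Sum>v\<in>UNIV. (\<alpha>$v)^2 * trace (transpose P ** (Z v ** T v)))
     - beta * frob_sq P
     - (\<Sum>i\<in>UNIV. \<Sum>j\<in>UNIV. H$i$j * P$i$j)"

definition hfun ::
  "real \<Rightarrow> real \<Rightarrow> ('v \<Rightarrow> real^'m^'n) \<Rightarrow> ('v \<Rightarrow> real^'m^'m) \<Rightarrow> real^'m^'n
     \<Rightarrow> real^'v::finite \<Rightarrow> real" where
  "hfun lam beta Z T H \<alpha> =
     (SUP P\<in>(row_stoch :: (real^'m::finite^'n::finite) set). inner_obj lam beta Z T H \<alpha> P)"

end

theory Submission
  imports Defs
begin

text \<open>
  Writing L(\<alpha>) = lam \<Sum>v. \<alpha>v^2 Zv Tv - H, the inner objective is
  F(L, P) = \<langle>L, P\<rangle> - beta |P|^2 and h = \<phi> \<circ> L with \<phi>(L) = max {F(L, P) | P \<in> S} over the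
  compact convex set S of row-stochastic matrices. Since F(L, -) is strongly concave, its maximiser
  P(L) is unique and F(L, Q) \<le> F(L, P(L)) - beta |Q - P(L)|^2 on S. Comparing with the maximiser
  at M and completing the square gives
  0 \<le> \<phi>(M) - \<phi>(L) - \<langle>M - L, P(L)\<rangle> \<le> |M - L|^2 / (4 beta),
  so \<phi> is differentiable with gradient P(L) (Danskin), and the chain rule finishes the proof.
\<close>

lemma nonpos_if_le_small_multiples:
  fixes a k :: real
  assumes "\<And>t. 0 < t \<Longrightarrow> t \<le> 1 \<Longrightarrow> a \<le> t * k"
  shows "a \<le> 0"
proof (rule tendsto_le[of "at_right 0"])
  show "((\<lambda>t. t * k) \<longlongrightarrow> 0) (at_right 0)"
    by (auto intro!: tendsto_eq_intros)
  show "\<forall>\<^sub>F t in at_right 0. a \<le> t * k"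
    unfolding eventually_at_right_field using assms by (intro exI[of _ 1]) auto
qed auto

definition quad_obj :: "real \<Rightarrow> 'a::real_inner \<Rightarrow> 'a \<Rightarrow> real" where
  "quad_obj b L X = L \<bullet> X - b * (X \<bullet> X)"

definition quad_envelope :: "'a::real_inner set \<Rightarrow> real \<Rightarrow> 'a \<Rightarrow> real" where
  "quad_envelope S b L = (SUP X\<in>S. quad_obj b L X)"

lemma quad_obj_add_scaleR:
  "quad_obj b L (P + t *\<^sub>R D) = quad_obj b L P + t * (L \<bullet> D - 2 * b * (P \<bullet> D)) - b * t^2 * (D \<bullet> D)"
  unfolding quad_obj_def
  by (simp add: inner_add_left inner_add_right inner_commute algebra_simps power2_eq_square)

lemma quad_obj_maximizer_growth:
  assumes "convex S" "P \<in> S" "Q \<in> S"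
    and max: "\<And>X. X \<in> S \<Longrightarrow> quad_obj b L X \<le> quad_obj b L P"
  shows "quad_obj b L Q \<le> quad_obj b L P - b * ((Q - P) \<bullet> (Q - P))"
proof -
  define D where "D = Q - P"
  have "L \<bullet> D - 2 * b * (P \<bullet> D) \<le> 0"
  proof (rule nonpos_if_le_small_multiples)
    fix t :: real assume t: "0 < t" "t \<le> 1"
    have "P + t *\<^sub>R D = (1 - t) *\<^sub>R P + t *\<^sub>R Q" by (simp add: D_def algebra_simps)
    also have "\<dots> \<in> S" using convexD[OF assms(1-3)] t by simp
    finally have "quad_obj b L (P + t *\<^sub>R D) \<le> quad_obj b L P" by (rule max)
    then have "t * (L \<bullet> D - 2 * b * (P \<bullet> D)) \<le> t * (t * (b * (D \<bullet> D)))"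
      by (simp add: quad_obj_add_scaleR power2_eq_square algebra_simps)
    then show "L \<bullet> D - 2 * b * (P \<bullet> D) \<le> t * (b * (D \<bullet> D))"
      using t by simp
  qed
  then show ?thesis using quad_obj_add_scaleR[of b L P 1 D] by (simp add: D_def)
qed

lemma quad_obj_maximizer_unique:
  assumes "convex S" "b > 0" "P \<in> S" "Q \<in> S"
    and "\<And>X. X \<in> S \<Longrightarrow> quad_obj b L X \<le> quad_obj b L P"
    and "quad_obj b L Q = quad_obj b L P"
  shows "Q = P"
proof -
  have "b * ((Q - P) \<bullet> (Q - P)) \<le> 0"
    using quad_obj_maximizer_growth[OF assms(1,3,4,5)] assms(6) by simp
  then have "(Q - P) \<bullet> (Q - P) \<le> 0" using assms(2) by (simp add: mult_le_0_iff)
  then have "(Q - P) \<bullet> (Q - P) = 0" using inner_ge_zero[of "Q - P"] by linarith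
  then show ?thesis by simp
qed

lemma quad_envelope_eq_maximum:
  assumes "P \<in> S" "\<And>X. X \<in> S \<Longrightarrow> quad_obj b L X \<le> quad_obj b L P"
  shows "quad_envelope S b L = quad_obj b L P"
  unfolding quad_envelope_def using assms by (intro cSup_eq_maximum) auto

lemma quad_obj_maximizer_exists:
  fixes S :: "'a::real_inner set"
  assumes "compact S" "S \<noteq> {}"
  obtains P where "P \<in> S" "\<And>X. X \<in> S \<Longrightarrow> quad_obj b L X \<le> quad_obj b L P"
proof -
  have "continuous_on S (quad_obj b L)"
    unfolding quad_obj_def by (intro continuous_intros)
  then show ?thesis using continuous_attains_sup[OF assms] that by blast
qed

lemma quad_envelope_linearization:
  fixes S :: "'a::real_inner set"
  assumes "compact S" "convex S" "b > 0" "P \<in> S"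
    and max: "\<And>X. X \<in> S \<Longrightarrow> quad_obj b L X \<le> quad_obj b L P"
  shows "\<bar>quad_envelope S b M - quad_envelope S b L - (M - L) \<bullet> P\<bar> \<le> (norm (M - L))^2 / (4 * b)"
proof -
  obtain Q where Q: "Q \<in> S" "\<And>X. X \<in> S \<Longrightarrow> quad_obj b M X \<le> quad_obj b M Q"
    using quad_obj_maximizer_exists[of S b M] assms(1,4) by blast
  have env: "quad_envelope S b M - quad_envelope S b L - (M - L) \<bullet> P
      = quad_obj b M Q - quad_obj b M P"
    using quad_envelope_eq_maximum[OF Q] quad_envelope_eq_maximum[OF assms(4) max]
    by (simp add: quad_obj_def inner_diff_left)
  define n where "n = norm (Q - P)"
  have "quad_obj b M Q - quad_obj b M P = quad_obj b L Q - quad_obj b L P + (M - L) \<bullet> (Q - P)"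
    by (simp add: quad_obj_def inner_diff_left inner_diff_right)
  also have "\<dots> \<le> norm (M - L) * n - b * n^2"
    using quad_obj_maximizer_growth[OF assms(2,4) Q(1) max] norm_cauchy_schwarz[of "M - L" "Q - P"]
    by (simp add: n_def power2_norm_eq_inner)
  also have "\<dots> \<le> (norm (M - L))^2 / (4 * b)"
  proof -
    have "4 * b * (norm (M - L) * n - b * n^2) = (norm (M - L))^2 - (norm (M - L) - 2 * b * n)^2"
      by (simp add: power2_eq_square algebra_simps)
    then have "4 * b * (norm (M - L) * n - b * n^2) \<le> (norm (M - L))^2" by simp
    then show ?thesis using assms(3) by (simp add: field_simps)
  qed
  finally show ?thesis using Q(2)[OF assms(4)] env by simp
qed

lemma has_derivative_of_quadratic_remainder:
  fixes f :: "'a::real_normed_vector \<Rightarrow> 'b::real_normed_vector"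
  assumes "bounded_linear f'"
    and "\<And>y. norm (f y - f x - f' (y - x)) \<le> C * (norm (y - x))^2"
  shows "(f has_derivative f') (at x)"
  unfolding has_derivative_at_within
proof (intro conjI assms(1))
  have "\<forall>y. norm ((f y - f x - f' (y - x)) /\<^sub>R norm (y - x)) \<le> C * norm (y - x)"
  proof (intro allI)
    fix y
    show "norm ((f y - f x - f' (y - x)) /\<^sub>R norm (y - x)) \<le> C * norm (y - x)"
    proof (cases "y = x")
      case False
      then have pos: "norm (y - x) > 0" by simp
      have "norm ((f y - f x - f' (y - x)) /\<^sub>R norm (y - x)) = norm (f y - f x - f' (y - x)) / norm (y - x)"
        by (simp add: divide_inverse_commute)
      also have "\<dots> \<le> C * norm (y - x)"
        unfolding pos_divide_le_eq[OF pos] using assms(2)[of y] by (simp add: power2_eq_square mult.assoc)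
      finally show ?thesis .
    qed simp
  qed
  moreover have "((\<lambda>y. C * norm (y - x)) \<longlongrightarrow> 0) (at x)"
    by (intro tendsto_mult_right_zero tendsto_norm_zero) (simp add: LIM_zero_iff tendsto_ident_at)
  ultimately show "((\<lambda>y. (f y - f x - f' (y - x)) /\<^sub>R norm (y - x)) \<longlongrightarrow> 0) (at x)"
    by (rule Lim_null_comparison[OF always_eventually])
qed

lemma quad_envelope_has_derivative:
  fixes S :: "'a::real_inner set"
  assumes "compact S" "convex S" "b > 0" "P \<in> S"
    and "\<And>X. X \<in> S \<Longrightarrow> quad_obj b L X \<le> quad_obj b L P"
  shows "(quad_envelope S b has_derivative (\<lambda>M. M \<bullet> P)) (at L)"
  using quad_envelope_linearization[OF assms]
  by (intro has_derivative_of_quadratic_remainder[where C = "1 / (4 * b)"] bounded_linear_inner_left)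
    simp

lemma trace_transpose_mult_eq_inner:
  fixes P A :: "real^'m::finite^'n::finite"
  shows "trace (transpose P ** A) = P \<bullet> A"
  unfolding trace_def matrix_matrix_mult_def transpose_def inner_vec_def
  by (simp add: inner_real_def sum.swap[of _ "UNIV::'m set"])

lemma frob_sq_eq_inner: "frob_sq P = P \<bullet> P"
  unfolding frob_sq_def inner_vec_def by (simp add: inner_real_def power2_eq_square)

definition obj_coeff :: "real \<Rightarrow> ('v \<Rightarrow> real^'m^'n) \<Rightarrow> ('v \<Rightarrow> real^'m^'m) \<Rightarrow> real^'m^'n
     \<Rightarrow> real^'v::finite \<Rightarrow> real^'m::finite^'n::finite" where
  "obj_coeff lam Z T H \<alpha> = lam *\<^sub>R (\<Sum>v\<in>UNIV. (\<alpha>$v)^2 *\<^sub>R (Z v ** T v)) - H"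

lemma inner_obj_eq_quad_obj:
  "inner_obj lam beta Z T H \<alpha> P = quad_obj beta (obj_coeff lam Z T H \<alpha>) P"
proof -
  have "(\<Sum>i\<in>UNIV. \<Sum>j\<in>UNIV. H$i$j * P$i$j) = H \<bullet> P"
    unfolding inner_vec_def by (simp add: inner_real_def)
  moreover have "(\<Sum>v\<in>UNIV. (\<alpha>$v)^2 * trace (transpose P ** (Z v ** T v)))
      = (\<Sum>v\<in>UNIV. (\<alpha>$v)^2 *\<^sub>R (Z v ** T v)) \<bullet> P"
    by (simp add: trace_transpose_mult_eq_inner inner_sum_left inner_commute[of P])
  ultimately show ?thesis
    unfolding inner_obj_def quad_obj_def obj_coeff_def frob_sq_eq_inner by (simp add: inner_diff_left)
qed

lemma hfun_eq_quad_envelope: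
  "hfun lam beta Z T H \<alpha> = quad_envelope row_stoch beta (obj_coeff lam Z T H \<alpha>)"
  unfolding hfun_def quad_envelope_def inner_obj_eq_quad_obj ..

lemma obj_coeff_has_derivative:
  "(obj_coeff lam Z T H has_derivative
     (\<lambda>d. lam *\<^sub>R (\<Sum>v\<in>UNIV. (2 * \<alpha>$v * d$v) *\<^sub>R (Z v ** T v)))) (at \<alpha>)"
  unfolding obj_coeff_def[abs_def]
  by (auto intro!: derivative_eq_intros bounded_linear_imp_has_derivative bounded_linear_vec_nth
      simp: mult_ac)

lemma convex_row_stoch: "convex (row_stoch :: (real^'m::finite^'n::finite) set)"
  unfolding convex_def row_stoch_def
  by (auto simp: sum.distrib sum_distrib_left[symmetric])

lemma closed_row_stoch: "closed (row_stoch :: (real^'m::finite^'n::finite) set)"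
  unfolding row_stoch_def
  by (intro closed_Collect_conj closed_Collect_all closed_Collect_le closed_Collect_eq continuous_intros)

lemma bounded_row_stoch: "bounded (row_stoch :: (real^'m::finite^'n::finite) set)"
proof -
  have "norm P \<le> real CARD('n)" if "P \<in> row_stoch" for P :: "real^'m^'n"
  proof -
    have "norm P \<le> (\<Sum>i\<in>UNIV. norm (P$i))" by (simp add: norm_vec_def L2_set_le_sum)
    also have "\<dots> \<le> (\<Sum>i\<in>UNIV. \<Sum>j\<in>UNIV. \<bar>P$i$j\<bar>)"
      by (intro sum_mono norm_le_l1_cart)
    also have "\<dots> = (\<Sum>i\<in>(UNIV::'n set). 1)"
      using that unfolding row_stoch_def by simp
    finally show ?thesis by simp
  qed
  then show ?thesis unfolding bounded_iff by blast
qed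

lemma compact_row_stoch: "compact (row_stoch :: (real^'m::finite^'n::finite) set)"
  using closed_row_stoch bounded_row_stoch by (simp add: compact_eq_bounded_closed)

lemma row_stoch_nonempty: "(row_stoch :: (real^'m::finite^'n::finite) set) \<noteq> {}"
proof -
  have "(\<chi> i j. 1 / real CARD('m)) \<in> (row_stoch :: (real^'m^'n) set)"
    unfolding row_stoch_def by simp
  then show ?thesis by blast
qed

theorem theorem1:
  fixes lam beta :: real
    and Z :: "'v::finite \<Rightarrow> real^'m::finite^'n::finite"
    and T :: "'v \<Rightarrow> real^'m^'m"
    and H :: "real^'m^'n"
    and \<alpha> :: "real^'v"
  assumes "lam > 0" and "beta > 0"
    and "\<And>v. Z v \<in> row_stoch"
    and "\<And>v. transpose (T v) ** T v = mat 1"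
    and "\<And>i j. 0 \<le> H$i$j"
    and "\<And>v. 0 \<le> \<alpha>$v" and "(\<Sum>v\<in>UNIV. \<alpha>$v) = 1"
  shows "(\<exists>!P. P \<in> row_stoch \<and>
              inner_obj lam beta Z T H \<alpha> P = hfun lam beta Z T H \<alpha>)
         \<and> hfun lam beta Z T H differentiable (at \<alpha>)
         \<and> (\<forall>Pstar. Pstar \<in> row_stoch \<and>
                 inner_obj lam beta Z T H \<alpha> Pstar = hfun lam beta Z T H \<alpha> \<longrightarrow>
               (hfun lam beta Z T H has_derivative
                  (\<lambda>d. \<Sum>v\<in>UNIV. d$v *
                     (2 * lam * \<alpha>$v * trace (transpose Pstar ** (Z v ** T v))))) (at \<alpha>))"
proof -
  let ?L = "obj_coeff lam Z T H \<alpha>"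
  obtain P where P: "P \<in> row_stoch" "\<And>X. X \<in> row_stoch \<Longrightarrow> quad_obj beta ?L X \<le> quad_obj beta ?L P"
    using quad_obj_maximizer_exists[OF compact_row_stoch row_stoch_nonempty] by blast
  have hfun_P: "hfun lam beta Z T H \<alpha> = inner_obj lam beta Z T H \<alpha> P"
    by (simp add: hfun_eq_quad_envelope inner_obj_eq_quad_obj quad_envelope_eq_maximum[OF P])
  have maximizer_iff: "Q \<in> row_stoch \<and> inner_obj lam beta Z T H \<alpha> Q = hfun lam beta Z T H \<alpha> \<longleftrightarrow> Q = P"
    for Q
    using quad_obj_maximizer_unique[OF convex_row_stoch assms(2) P(1) _ P(2)] P(1) hfun_P
    by (auto simp: inner_obj_eq_quad_obj)
  have "(hfun lam beta Z T H has_derivative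
      (\<lambda>d. (lam *\<^sub>R (\<Sum>v\<in>UNIV. (2 * \<alpha>$v * d$v) *\<^sub>R (Z v ** T v))) \<bullet> P)) (at \<alpha>)"
    unfolding hfun_eq_quad_envelope[abs_def]
    by (rule has_derivative_compose[OF obj_coeff_has_derivative
          quad_envelope_has_derivative[OF compact_row_stoch convex_row_stoch assms(2) P]])
  moreover have "(lam *\<^sub>R (\<Sum>v\<in>UNIV. (2 * \<alpha>$v * d$v) *\<^sub>R (Z v ** T v))) \<bullet> P
      = (\<Sum>v\<in>UNIV. d$v * (2 * lam * \<alpha>$v * trace (transpose P ** (Z v ** T v))))" for d
    by (simp add: inner_sum_left sum_distrib_left trace_transpose_mult_eq_inner inner_commute[of P] algebra_simps)
  ultimately show ?thesis
    using maximizer_iff by (auto intro: differentiableI)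
qed

end
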